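(* Let $M_{1/2} := \mathbb{N}_0[\frac12]$. If an irreducible polynomial $P(x) \in \mathbb{Z}[x]$ is not atomic in the monoid algebra $\mathbb{Q}[M_{1/2}]$, then $P(x)$ has a splitting sequence whose binary string contains infinitely many copies of $S$.
   Context: $\mathbb{Q}[M_{1/2}]$ is the domain of polynomial expressions with rational coefficients and nonnegative dyadic rational exponents; an element is atomic if it is a unit or a finite product of irreducibles. Splitting sequence: for an irreducible $P(x) \in \mathbb{Z}[x]$, a sequence $(P_n(x))_{n \ge 0}$ in $\mathbb{Z}[x]$ with $P_0 = P$ such that for each $n \ge 0$: if $P_n$ is irreducible in $\mathbb{Z}[x]$, then $P_{n+1}(x) = P_n(x^2)$ (the square lifting); if $P_n$ is reducible, then (as $n \ge 1$, $P_{n-1}$ is irreducible and $P_n(x) = P_{n-1}(x^2)$, which factors in $\mathbb{Z}[x]$ as a product of exactly two irreducible polynomials) $P_{n+1}$ is one of these two irreducible factors (a splitting of $P_n$). The binary string of the sequence is $s_0 s_1 s_2 \ldots$ where $s_n = L$ if $P_n$ is irreducible in $\mathbb{Z}[x]$ and $s_n = S$ otherwise. *)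

theory Defs
  imports "HOL-Computational_Algebra.Polynomial" "HOL-Computational_Algebra.Factorial_Ring"
          "HOL-Library.Poly_Mapping"
begin

typedef dyadic = "{q :: rat. 0 \<le> q \<and> (\<exists>n::nat. q * 2 ^ n \<in> \<int>)}"
  by (rule exI[of _ 0]) auto

setup_lifting type_definition_dyadic

instantiation dyadic :: comm_monoid_add
begin

lift_definition zero_dyadic :: dyadic is "0 :: rat" by auto

lift_definition plus_dyadic :: "dyadic \<Rightarrow> dyadic \<Rightarrow> dyadic" is "(+) :: rat \<Rightarrow> rat \<Rightarrow> rat"
proof -
  fix q r :: rat
  assume q: "0 \<le> q \<and> (\<exists>n::nat. q * 2 ^ n \<in> \<int>)" and r: "0 \<le> r \<and> (\<exists>n::nat. r * 2 ^ n \<in> \<int>)"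
  then obtain n m :: nat where n: "q * 2 ^ n \<in> \<int>" and m: "r * 2 ^ m \<in> \<int>" by blast
  have "(q + r) * 2 ^ (n + m) = (q * 2 ^ n) * 2 ^ m + (r * 2 ^ m) * 2 ^ n"
    by (simp add: power_add algebra_simps)
  also have "\<dots> \<in> \<int>" using n m by (metis Ints_add Ints_mult Ints_power Ints_numeral)
  finally show "0 \<le> q + r \<and> (\<exists>n::nat. (q + r) * 2 ^ n \<in> \<int>)" using q r by auto
qed

instance
  by standard (transfer; simp add: algebra_simps)+

end

lift_definition dyadic_of_nat :: "nat \<Rightarrow> dyadic" is "\<lambda>n. of_nat n :: rat"
  by (rule conjI, simp, rule exI[of _ 0], simp)

type_synonym QM = "dyadic \<Rightarrow>\<^sub>0 rat"

definition QM_of_int_poly :: "int poly \<Rightarrow> QM" where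
  "QM_of_int_poly P = (\<Sum>i\<le>degree P. Poly_Mapping.single (dyadic_of_nat i) (of_int (coeff P i)))"

definition atomic_QM :: "QM \<Rightarrow> bool" where
  "atomic_QM f \<longleftrightarrow> f dvd 1 \<or>
     (\<exists>xs. xs \<noteq> [] \<and> (\<forall>x\<in>set xs. irreducible x) \<and> f = prod_list xs)"

definition square_lift :: "int poly \<Rightarrow> int poly" where
  "square_lift p = pcompose p [:0, 0, 1:]"

definition splitting_sequence :: "int poly \<Rightarrow> (nat \<Rightarrow> int poly) \<Rightarrow> bool" where
  "splitting_sequence P Ps \<longleftrightarrow> Ps 0 = P \<and>
     (\<forall>n. (irreducible (Ps n) \<longrightarrow> Ps (Suc n) = square_lift (Ps n)) \<and>
          (\<not> irreducible (Ps n) \<longrightarrow>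
             (\<exists>Q. irreducible (Ps (Suc n)) \<and> irreducible Q \<and> Ps n = Ps (Suc n) * Q)))"

definition string_is_S :: "(nat \<Rightarrow> int poly) \<Rightarrow> nat \<Rightarrow> bool" where
  "string_is_S Ps n \<longleftrightarrow> \<not> irreducible (Ps n)"

end

theory Submission
  imports Defs "HOL-Computational_Algebra.Polynomial_Factorial"
begin

(* Q[M_{1/2}] is the union of the rings Q[x^(1/2^m)], into which Z[x] embeds by
   p |-> p(x^(1/2^m)), and every element lands in one of these images after multiplication by a
   positive integer. So a factorisation of p(x^(1/2^k)) in Q[M_{1/2}] pulls back, up to an integer
   factor, to a factorisation of some iterated square lifting p(x^(2^j)) in Z[x]: if all of these
   are irreducible, p(x^(1/2^k)) is a unit or irreducible, in particular atomic.
   If r is irreducible, every nonunit divisor g of r(x^2) has degree at least deg r, because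
   g(x) g(-x) = e(x^2) with e a nonunit divisor of r^2, which r must divide; hence r(x^2) is
   irreducible or a product of two irreducibles. As a product of atomic elements is atomic, one
   can always continue with a non-atomic factor. This builds a splitting sequence all of whose
   terms stay non-atomic in Q[M_{1/2}]; with only finitely many S, some term would have only
   irreducible square liftings, which is impossible. *)

section \<open>Even polynomials and square liftings\<close>

lemma poly_even_odd_decomp:
  fixes p :: "'a::comm_ring_1 poly"
  shows "\<exists>e d. p = e \<circ>\<^sub>p [:0, 0, 1:] + [:0, 1:] * (d \<circ>\<^sub>p [:0, 0, 1:])"
proof (induction p)
  case 0
  show ?case by (intro exI[of _ 0]) simp
next
  case (pCons a p)
  then obtain e d where "p = e \<circ>\<^sub>p [:0, 0, 1:] + [:0, 1:] * (d \<circ>\<^sub>p [:0, 0, 1:])"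
    by blast
  then have "pCons a p = pCons a d \<circ>\<^sub>p [:0, 0, 1:] + [:0, 1:] * (e \<circ>\<^sub>p [:0, 0, 1:])"
    by (simp add: pcompose_pCons algebra_simps)
  then show ?case by blast
qed

lemma pcompose_square_reflect:
  fixes p :: "'a::comm_ring_1 poly"
  shows "(p \<circ>\<^sub>p [:0, 0, 1:]) \<circ>\<^sub>p [:0, -1:] = p \<circ>\<^sub>p [:0, 0, 1:]"
  by (simp add: pcompose_pCons flip: pcompose_assoc)

lemma pcompose_reflect_reflect:
  fixes p :: "'a::comm_ring_1 poly"
  shows "(p \<circ>\<^sub>p [:0, -1:]) \<circ>\<^sub>p [:0, -1:] = p"
  by (simp add: pcompose_pCons flip: pcompose_assoc)

lemma pcompose_square_inj:
  fixes p q :: "'a::idom poly"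
  assumes "p \<circ>\<^sub>p [:0, 0, 1:] = q \<circ>\<^sub>p [:0, 0, 1:]"
  shows "p = q"
proof -
  have "(p - q) \<circ>\<^sub>p [:0, 0, 1:] = 0"
    using assms by (simp add: pcompose_diff)
  then show ?thesis by (simp add: pcompose_eq_0_iff)
qed

lemma even_poly_imp_pcompose_square:
  fixes p :: "'a::{idom, ring_char_0} poly"
  assumes "p \<circ>\<^sub>p [:0, -1:] = p"
  shows "\<exists>e. p = e \<circ>\<^sub>p [:0, 0, 1:]"
proof -
  obtain e d where p: "p = e \<circ>\<^sub>p [:0, 0, 1:] + [:0, 1:] * (d \<circ>\<^sub>p [:0, 0, 1:])"
    using poly_even_odd_decomp by blast
  have "p \<circ>\<^sub>p [:0, -1:] = e \<circ>\<^sub>p [:0, 0, 1:] - [:0, 1:] * (d \<circ>\<^sub>p [:0, 0, 1:])"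
    by (simp add: p pcompose_add pcompose_mult pcompose_square_reflect pcompose_pCons)
  with assms p have "smult 2 ([:0, 1:] * (d \<circ>\<^sub>p [:0, 0, 1:])) = 0"
    by (simp add: algebra_simps)
  then have "d = 0"
    by (simp add: pcompose_eq_0_iff)
  with p show ?thesis by auto
qed

lemma mult_reflect_eq_pcompose_square:
  fixes g :: "'a::{idom, ring_char_0} poly"
  shows "\<exists>e. g * (g \<circ>\<^sub>p [:0, -1:]) = e \<circ>\<^sub>p [:0, 0, 1:]"
proof -
  have "(g * (g \<circ>\<^sub>p [:0, -1:])) \<circ>\<^sub>p [:0, -1:] = g * (g \<circ>\<^sub>p [:0, -1:])"
    unfolding pcompose_mult pcompose_reflect_reflect by (rule mult.commute)
  then show ?thesis
    by (rule even_poly_imp_pcompose_square)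
qed

lemma pcompose_square_dvd_imp_dvd:
  fixes p q :: "'a::{idom, ring_char_0} poly"
  assumes "p \<circ>\<^sub>p [:0, 0, 1:] dvd q \<circ>\<^sub>p [:0, 0, 1:]"
  shows "p dvd q"
proof (cases "p = 0")
  case True
  with assms show ?thesis
    by (simp add: pcompose_eq_0_iff)
next
  case False
  then have nonzero: "p \<circ>\<^sub>p [:0, 0, 1:] \<noteq> 0"
    by (simp add: pcompose_eq_0_iff)
  from assms obtain r where r: "q \<circ>\<^sub>p [:0, 0, 1:] = p \<circ>\<^sub>p [:0, 0, 1:] * r"
    by (elim dvdE)
  have "q \<circ>\<^sub>p [:0, 0, 1:] = p \<circ>\<^sub>p [:0, 0, 1:] * (r \<circ>\<^sub>p [:0, -1:])"
    using arg_cong[OF r, of "\<lambda>s. s \<circ>\<^sub>p [:0, -1:]"]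
    by (simp only: pcompose_mult pcompose_square_reflect)
  then have "p \<circ>\<^sub>p [:0, 0, 1:] * (r \<circ>\<^sub>p [:0, -1:]) = p \<circ>\<^sub>p [:0, 0, 1:] * r"
    unfolding r by (rule sym)
  with nonzero have "r \<circ>\<^sub>p [:0, -1:] = r"
    by simp
  then obtain e where e: "r = e \<circ>\<^sub>p [:0, 0, 1:]"
    using even_poly_imp_pcompose_square by blast
  have "q \<circ>\<^sub>p [:0, 0, 1:] = (p * e) \<circ>\<^sub>p [:0, 0, 1:]"
    unfolding r e pcompose_mult ..
  then have "q = p * e"
    by (rule pcompose_square_inj)
  then show ?thesis by simp
qed

lemma mult_eq_smult_prime_imp_degree_0:
  fixes p q f :: "'a::idom poly"
  assumes pq: "p * q = smult c f" and "c \<noteq> 0" "prime_elem f"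
  shows "degree p = 0 \<or> degree q = 0"
proof -
  have "f \<noteq> 0"
    using \<open>prime_elem f\<close> by auto
  with pq \<open>c \<noteq> 0\<close> have "p \<noteq> 0" "q \<noteq> 0"
    by auto
  with pq \<open>c \<noteq> 0\<close> have deg: "degree p + degree q = degree f"
    by (metis degree_mult_eq degree_smult_eq)
  from pq have "f dvd p * q"
    by (simp add: dvd_smult)
  with \<open>prime_elem f\<close> have "f dvd p \<or> f dvd q"
    by (simp add: prime_elem_dvd_mult_iff)
  with deg \<open>p \<noteq> 0\<close> \<open>q \<noteq> 0\<close> show ?thesis
    by (auto dest: dvd_imp_degree_le)
qed

lemma degree_funpow_square_lift: "degree ((square_lift ^^ t) p) = 2 ^ t * degree p"
  by (induction t) (simp_all add: square_lift_def degree_pcompose)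

lemma irreducible_dvd_nonunit_dvd_power:
  fixes r e :: "'a::factorial_semiring"
  assumes irr: "irreducible r" and "e dvd r ^ n" "\<not> e dvd 1"
  shows "r dvd e"
proof -
  from assms have "e \<noteq> 0"
    by auto
  with \<open>\<not> e dvd 1\<close> obtain b where b: "b dvd e" "prime b"
    using prime_divisor_exists by blast
  with \<open>e dvd r ^ n\<close> have "b dvd r"
    by (blast intro: prime_dvd_power dvd_trans)
  then have "r dvd b"
    using irreducibleD'[OF irr] b(2) not_prime_unit by blast
  from this b(1) show ?thesis
    by (rule dvd_trans)
qed

lemma degree_le_degree_of_square_lift_divisor:
  fixes r g :: "int poly"
  assumes irr: "irreducible r" and g: "g dvd square_lift r" "\<not> g dvd 1"
  shows "degree r \<le> degree g"
proof -
  define h where "h = g * (g \<circ>\<^sub>p [:0, -1:])"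
  obtain e where e: "h = e \<circ>\<^sub>p [:0, 0, 1:]"
    using mult_reflect_eq_pcompose_square[of g] by (auto simp: h_def)
  from g(1) obtain k where k: "square_lift r = g * k"
    by (elim dvdE)
  have "square_lift r = (g \<circ>\<^sub>p [:0, -1:]) * (k \<circ>\<^sub>p [:0, -1:])"
    using arg_cong[OF k, of "\<lambda>p. p \<circ>\<^sub>p [:0, -1:]"]
    by (simp add: square_lift_def pcompose_square_reflect pcompose_mult)
  then have "g \<circ>\<^sub>p [:0, -1:] dvd square_lift r"
    by simp
  with g(1) have "e \<circ>\<^sub>p [:0, 0, 1:] dvd (r ^ 2) \<circ>\<^sub>p [:0, 0, 1:]"
    by (simp add: e [symmetric] h_def square_lift_def pcompose_mult power2_eq_square mult_dvd_mono)
  then have "e dvd r ^ 2"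
    by (rule pcompose_square_dvd_imp_dvd)
  moreover have "\<not> e dvd 1"
  proof
    assume "e dvd 1"
    then have "h dvd 1"
      by (auto simp: e is_unit_poly_iff)
    with g(2) show False
      by (simp add: h_def is_unit_mult_iff)
  qed
  ultimately have "r dvd e"
    by (rule irreducible_dvd_nonunit_dvd_power[OF irr])
  moreover have "e \<noteq> 0" "g \<noteq> 0"
    using g(1) irr e by (auto simp: h_def square_lift_def pcompose_eq_0_iff)
  ultimately have "degree r \<le> degree e"
    by (simp add: dvd_imp_degree_le)
  moreover have "degree h = 2 * degree g"
    using \<open>g \<noteq> 0\<close> by (simp add: h_def degree_mult_eq degree_pcompose pcompose_eq_0_iff)
  ultimately show ?thesis
    using e by (simp add: degree_pcompose)
qed

lemma irreducible_square_lift_divisor_of_same_degree: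
  fixes r c :: "int poly"
  assumes irr: "irreducible r" and "degree r \<noteq> 0"
    and c: "c dvd square_lift r" "\<not> c dvd 1" "degree c = degree r"
  shows "irreducible c"
proof -
  from c(3) \<open>degree r \<noteq> 0\<close> have "c \<noteq> 0"
    by auto
  show ?thesis
  proof (rule irreducibleI)
    fix x y
    assume xy: "c = x * y"
    show "x dvd 1 \<or> y dvd 1"
    proof (rule ccontr)
      assume "\<not> (x dvd 1 \<or> y dvd 1)"
      moreover have "x dvd square_lift r" "y dvd square_lift r"
        using c(1) xy dvd_mult_left dvd_mult_right by blast+
      ultimately have "degree r \<le> degree x" "degree r \<le> degree y"
        using degree_le_degree_of_square_lift_divisor[OF irr] by auto
      moreover have "degree c = degree x + degree y"
        using xy \<open>c \<noteq> 0\<close> by (simp add: degree_mult_eq)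
      ultimately show False
        using c(3) \<open>degree r \<noteq> 0\<close> by simp
    qed
  qed fact+
qed

lemma square_lift_reducible_imp_two_irreducible_factors:
  fixes r :: "int poly"
  assumes irr: "irreducible r" and red: "\<not> irreducible (square_lift r)"
  shows "\<exists>a b. irreducible a \<and> irreducible b \<and> square_lift r = a * b"
proof -
  have "degree r \<noteq> 0"
  proof
    assume "degree r = 0"
    then have "square_lift r = r"
      by (auto simp: square_lift_def elim: degree_eq_zeroE)
    with irr red show False by simp
  qed
  have deg: "degree (square_lift r) = 2 * degree r"
    by (simp add: square_lift_def degree_pcompose)
  with \<open>degree r \<noteq> 0\<close> have "square_lift r \<noteq> 0" "\<not> square_lift r dvd 1"
    by (auto simp: is_unit_poly_iff)
  with red obtain a b where ab: "square_lift r = a * b" "\<not> a dvd 1" "\<not> b dvd 1"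
    by (auto simp: irreducible_def)
  with \<open>square_lift r \<noteq> 0\<close> have "degree a + degree b = 2 * degree r"
    using deg by (simp add: degree_mult_eq)
  moreover have "degree r \<le> degree a" "degree r \<le> degree b"
    using degree_le_degree_of_square_lift_divisor[OF irr] ab by auto
  ultimately have "irreducible a" "irreducible b"
    using irreducible_square_lift_divisor_of_same_degree[OF irr \<open>degree r \<noteq> 0\<close>] ab by auto
  with ab(1) show ?thesis by blast
qed

section \<open>Embedding Z[x] into Q[M_{1/2}] at level m\<close>

lemma map_poly_of_int_add:
  "map_poly of_int (p + q) = (map_poly of_int p + map_poly of_int q :: 'a::comm_ring_1 poly)"
  by (intro poly_eqI) (simp add: coeff_map_poly)

lemma map_poly_of_int_mult:
  "map_poly of_int (p * q) = (map_poly of_int p * map_poly of_int q :: 'a::comm_ring_1 poly)"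
  by (induction p) (simp_all add: map_poly_pCons map_poly_of_int_add map_poly_smult)

lemma map_poly_of_int_pcompose:
  "map_poly of_int (p \<circ>\<^sub>p q) = (map_poly of_int p \<circ>\<^sub>p map_poly of_int q :: 'a::comm_ring_1 poly)"
  by (induction p) (simp_all add: pcompose_pCons map_poly_pCons map_poly_of_int_add map_poly_of_int_mult)

lift_definition dyadic_frac :: "nat \<Rightarrow> nat \<Rightarrow> dyadic" is "\<lambda>m i. of_nat i / 2 ^ m :: rat"
proof -
  fix m i :: nat
  show "0 \<le> (of_nat i / 2 ^ m :: rat) \<and> (\<exists>n::nat. of_nat i / 2 ^ m * 2 ^ n \<in> (\<int> :: rat set))"
    by (intro conjI exI[of _ m]) simp_all
qed

lemma dyadic_frac_add: "dyadic_frac m i + dyadic_frac m j = dyadic_frac m (i + j)"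
  by transfer (simp add: add_divide_distrib)

lemma dyadic_frac_0: "dyadic_frac m 0 = 0"
  by transfer simp

lemma dyadic_frac_Suc_double: "dyadic_frac (Suc m) (2 * i) = dyadic_frac m i"
  by transfer simp

lemma dyadic_frac_inject: "dyadic_frac m i = dyadic_frac m j \<longleftrightarrow> i = j"
  by transfer simp

lemma dyadic_of_nat_eq_dyadic_frac: "dyadic_of_nat i = dyadic_frac 0 i"
  by transfer simp

lemma dyadic_frac_surj: "\<exists>m i. q = dyadic_frac m i"
proof transfer
  fix q :: rat
  assume "0 \<le> q \<and> (\<exists>n::nat. q * 2 ^ n \<in> \<int>)"
  then obtain n z where q: "0 \<le> q" and z: "q * 2 ^ n = of_int z"
    by (auto elim: Ints_cases)
  have "(0::rat) \<le> of_int z"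
    using q by (simp flip: z)
  with z have "q = of_nat (nat z) / 2 ^ n"
    by (simp add: field_simps)
  then show "\<exists>m i. q = of_nat i / 2 ^ m"
    by blast
qed

definition QM_root :: "nat \<Rightarrow> QM" where
  "QM_root m = Poly_Mapping.single (dyadic_frac m 1) 1"

definition QM_embed :: "nat \<Rightarrow> int poly \<Rightarrow> QM" where
  "QM_embed m p = poly (map_poly of_int p) (QM_root m)"

lemma QM_root_power: "QM_root m ^ i = Poly_Mapping.single (dyadic_frac m i) 1"
  by (induction i) (simp_all add: QM_root_def mult_single dyadic_frac_add dyadic_frac_0)

lemma QM_root_Suc_square: "QM_root (Suc m) ^ 2 = QM_root m"
  unfolding QM_root_power using dyadic_frac_Suc_double[of m 1] by (simp add: QM_root_def)

lemma QM_embed_add: "QM_embed m (p + q) = QM_embed m p + QM_embed m q"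
  by (simp add: QM_embed_def map_poly_of_int_add)

lemma QM_embed_mult: "QM_embed m (p * q) = QM_embed m p * QM_embed m q"
  by (simp add: QM_embed_def map_poly_of_int_mult)

lemma QM_embed_const [simp]: "QM_embed m [:c:] = of_int c"
  by (simp add: QM_embed_def map_poly_pCons)

lemma QM_embed_0 [simp]: "QM_embed m 0 = 0"
  by (simp add: QM_embed_def)

lemma QM_embed_smult: "QM_embed m (smult c p) = of_int c * QM_embed m p"
  using QM_embed_mult[of m "[:c:]" p] by simp

lemma QM_embed_monom: "QM_embed m (monom c i) = Poly_Mapping.single (dyadic_frac m i) (of_int c)"
  by (simp add: QM_embed_def map_poly_monom poly_monom QM_root_power mult_single flip: single_of_int)

lemma QM_embed_square_lift: "QM_embed (Suc m) (square_lift p) = QM_embed m p"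
proof -
  have "poly (map_poly of_int [:0, 0, 1:]) x = x ^ 2" for x :: QM
    by (simp add: map_poly_pCons power2_eq_square)
  then show ?thesis
    by (simp add: QM_embed_def square_lift_def map_poly_of_int_pcompose poly_pcompose QM_root_Suc_square)
qed

lemma QM_embed_funpow_square_lift: "QM_embed (m + t) ((square_lift ^^ t) p) = QM_embed m p"
  by (induction t) (simp_all add: QM_embed_square_lift)

lemma QM_embed_lift_level:
  "k \<le> m \<Longrightarrow> QM_embed m ((square_lift ^^ (m - k)) p) = QM_embed k p"
  using QM_embed_funpow_square_lift[of k "m - k" p] by simp

lemma QM_embed_eq_sum:
  "QM_embed m p = (\<Sum>i\<le>degree p. Poly_Mapping.single (dyadic_frac m i) (of_int (coeff p i)))"
proof -
  have "degree (map_poly of_int p :: QM poly) = degree p"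
    by (rule degree_map_poly) simp
  then show ?thesis
    by (simp add: QM_embed_def poly_altdef coeff_map_poly QM_root_power mult_single flip: single_of_int)
qed

lemma QM_of_int_poly_eq_QM_embed: "QM_of_int_poly p = QM_embed 0 p"
  by (simp add: QM_of_int_poly_def QM_embed_eq_sum dyadic_of_nat_eq_dyadic_frac)

lemma lookup_QM_embed: "Poly_Mapping.lookup (QM_embed m p) (dyadic_frac m i) = of_int (coeff p i)"
  by (cases "i \<le> degree p")
    (auto simp: QM_embed_eq_sum lookup_sum lookup_single when_def dyadic_frac_inject coeff_eq_0)

lemma QM_embed_inject: "QM_embed m p = QM_embed m q \<longleftrightarrow> p = q"
  by (metis lookup_QM_embed of_int_eq_iff poly_eqI)

lemma poly_mapping_eq_sum_single:
  fixes f :: "'a \<Rightarrow>\<^sub>0 'b::comm_monoid_add"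
  shows "f = (\<Sum>k\<in>Poly_Mapping.keys f. Poly_Mapping.single k (Poly_Mapping.lookup f k))"
  by (rule poly_mapping_eqI) (simp add: lookup_sum lookup_single when_def in_keys_iff)

lemma QM_embed_covers_scaled_single:
  "\<exists>m c p. c > 0 \<and> QM_embed m p = of_int c * Poly_Mapping.single q r"
proof -
  obtain m i where q: "q = dyadic_frac m i"
    using dyadic_frac_surj by blast
  obtain a c where "quotient_of r = (a, c)"
    by (cases "quotient_of r")
  then have r: "r = of_int a / of_int c" and "c > 0"
    by (auto simp: quotient_of_div quotient_of_denom_pos)
  then have "QM_embed m (monom a i) = of_int c * Poly_Mapping.single q r"
    by (simp add: QM_embed_monom q mult_single flip: single_of_int)
  with \<open>c > 0\<close> show ?thesis by blast
qed

lemma QM_embed_covers_scaled: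
  fixes a :: QM
  shows "\<exists>m\<ge>k. \<exists>c>0. \<exists>p. QM_embed m p = of_int c * a"
proof -
  have "\<exists>m c p. c > 0 \<and> QM_embed m p = of_int c * (\<Sum>q\<in>K. Poly_Mapping.single q (Poly_Mapping.lookup a q))"
    if "finite K" for K
    using that
  proof (induction K rule: finite_induct)
    case empty
    show ?case by (intro exI[of _ 0] exI[of _ 1]) simp
  next
    case (insert q K)
    obtain m1 c1 p1 where c1: "c1 > 0"
      and p1: "QM_embed m1 p1 = of_int c1 * Poly_Mapping.single q (Poly_Mapping.lookup a q)"
      using QM_embed_covers_scaled_single by blast
    obtain m2 c2 p2 where c2: "c2 > 0"
      and p2: "QM_embed m2 p2 = of_int c2 * (\<Sum>q\<in>K. Poly_Mapping.single q (Poly_Mapping.lookup a q))"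
      using insert.IH by blast
    define p where "p = smult c2 ((square_lift ^^ m2) p1) + smult c1 ((square_lift ^^ m1) p2)"
    have "QM_embed (m1 + m2) p =
        of_int (c1 * c2) * (\<Sum>q\<in>insert q K. Poly_Mapping.single q (Poly_Mapping.lookup a q))"
      using insert.hyps QM_embed_funpow_square_lift[of m1 m2 p1] QM_embed_funpow_square_lift[of m2 m1 p2]
      by (simp add: p_def QM_embed_add QM_embed_smult p1 p2 add.commute[of m2] algebra_simps)
    with c1 c2 show ?case
      by (metis mult_pos_pos)
  qed
  from this[of "Poly_Mapping.keys a"] obtain m c p where "c > 0" "QM_embed m p = of_int c * a"
    by (auto simp flip: poly_mapping_eq_sum_single)
  with QM_embed_funpow_square_lift[of m k p] show ?thesis
    by (metis le_add2)
qed

section \<open>Units, irreducible and atomic elements of Q[M_{1/2}]\<close>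

lemma QM_of_int_is_unit: "c \<noteq> 0 \<Longrightarrow> (of_int c :: QM) dvd 1"
proof -
  assume "c \<noteq> 0"
  then have "of_int c * Poly_Mapping.single 0 (1 / of_int c) = (1 :: QM)"
    by (simp add: mult_single flip: single_of_int)
  then show ?thesis
    by (metis dvdI)
qed

lemma QM_embed_not_unit:
  assumes "degree p \<noteq> 0"
  shows "\<not> QM_embed k p dvd 1"
proof
  assume "QM_embed k p dvd 1"
  then obtain b where b: "QM_embed k p * b = 1"
    by (metis dvdE)
  obtain m c q where "k \<le> m" "c > 0" and q: "QM_embed m q = of_int c * b"
    using QM_embed_covers_scaled by blast
  define p' where "p' = (square_lift ^^ (m - k)) p"
  have "QM_embed m p' = QM_embed k p"
    using \<open>k \<le> m\<close> by (simp add: p'_def QM_embed_lift_level)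
  with b q have "QM_embed m (p' * q) = QM_embed m [:c:]"
    by (simp add: QM_embed_mult mult.left_commute)
  then have "p' * q = [:c:]"
    unfolding QM_embed_inject .
  moreover from this \<open>c > 0\<close> have "p' \<noteq> 0" "q \<noteq> 0"
    by auto
  moreover have "degree p' \<noteq> 0"
    using assms by (simp add: p'_def degree_funpow_square_lift)
  ultimately show False
    using degree_mult_eq[of p' q] by simp
qed

lemma QM_embed_const_scaled_imp_unit:
  assumes "QM_embed m p = of_int c * a" "c \<noteq> 0" "p \<noteq> 0" "degree p = 0"
  shows "a dvd 1"
proof -
  from \<open>degree p = 0\<close> obtain d where "p = [:d:]"
    by (rule degree_eq_zeroE)
  with assms(1,3) have "of_int c * a dvd 1"
    by (metis QM_embed_const QM_of_int_is_unit pCons_eq_0_iff)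
  then show ?thesis
    by (rule dvd_mult_right)
qed

lemma irreducible_QM_embed:
  fixes f :: "int poly"
  assumes irr: "\<And>j. irreducible ((square_lift ^^ j) f)" and "degree f \<noteq> 0"
  shows "irreducible (QM_embed k f)"
proof (rule irreducibleI)
  show "QM_embed k f \<noteq> 0"
    using \<open>degree f \<noteq> 0\<close> by (metis QM_embed_0 QM_embed_inject degree_0)
  show "\<not> QM_embed k f dvd 1"
    using \<open>degree f \<noteq> 0\<close> by (rule QM_embed_not_unit)
next
  fix a b
  assume ab: "QM_embed k f = a * b"
  obtain m1 c1 p1 where "k \<le> m1" "c1 > 0" and p1: "QM_embed m1 p1 = of_int c1 * a"
    using QM_embed_covers_scaled by blast
  obtain m c2 p2 where "m1 \<le> m" "c2 > 0" and p2: "QM_embed m p2 = of_int c2 * b"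
    using QM_embed_covers_scaled by blast
  define p1' where "p1' = (square_lift ^^ (m - m1)) p1"
  define F where "F = (square_lift ^^ (m - k)) f"
  have p1': "QM_embed m p1' = of_int c1 * a"
    using \<open>m1 \<le> m\<close> by (simp add: p1'_def p1 QM_embed_lift_level)
  have "QM_embed m F = QM_embed k f"
    using \<open>k \<le> m1\<close> \<open>m1 \<le> m\<close> by (simp add: F_def QM_embed_lift_level)
  with ab p1' p2 have "QM_embed m (p1' * p2) = QM_embed m (smult (c1 * c2) F)"
    by (simp add: QM_embed_mult QM_embed_smult algebra_simps)
  then have eq: "p1' * p2 = smult (c1 * c2) F"
    unfolding QM_embed_inject .
  moreover have "prime_elem F"
    using irr by (simp add: F_def prime_elem_iff_irreducible)
  ultimately have "degree p1' = 0 \<or> degree p2 = 0"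
    using \<open>c1 > 0\<close> \<open>c2 > 0\<close> by (intro mult_eq_smult_prime_imp_degree_0) auto
  moreover from eq \<open>prime_elem F\<close> \<open>c1 > 0\<close> \<open>c2 > 0\<close> have "p1' \<noteq> 0" "p2 \<noteq> 0"
    by auto
  ultimately show "a dvd 1 \<or> b dvd 1"
    using \<open>c1 > 0\<close> \<open>c2 > 0\<close>
    by (auto intro: QM_embed_const_scaled_imp_unit[OF p1'] QM_embed_const_scaled_imp_unit[OF p2])
qed

lemma irreducible_unit_mult:
  fixes u y :: "'a::comm_semiring_1"
  assumes "u dvd 1" "irreducible y"
  shows "irreducible (u * y)"
proof -
  from \<open>u dvd 1\<close> obtain v where "1 = u * v"
    by (elim dvdE)
  then have y: "y = v * (u * y)"
    by (metis mult.assoc mult.commute mult_1)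
  show ?thesis
  proof (rule irreducibleI)
    show "u * y \<noteq> 0"
      using y \<open>irreducible y\<close> by (metis irreducible_def mult_zero_right)
    show "\<not> u * y dvd 1"
      using \<open>irreducible y\<close> by (auto dest: dvd_mult_right irreducible_not_unit)
  next
    fix a b
    assume "u * y = a * b"
    with y have "y = (v * a) * b"
      by (simp add: mult.assoc)
    with \<open>irreducible y\<close> have "v * a dvd 1 \<or> b dvd 1"
      by (rule irreducibleD)
    then show "a dvd 1 \<or> b dvd 1"
      by (auto dest: dvd_mult_right)
  qed
qed

lemma atomic_QM_iff_unit_times_irreducibles:
  "atomic_QM a \<longleftrightarrow> (\<exists>u xs. u dvd 1 \<and> (\<forall>x\<in>set xs. irreducible x) \<and> a = u * prod_list xs)"
proof
  assume "atomic_QM a"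
  then show "\<exists>u xs. u dvd 1 \<and> (\<forall>x\<in>set xs. irreducible x) \<and> a = u * prod_list xs"
    unfolding atomic_QM_def
  proof (elim disjE exE conjE)
    assume "a dvd 1"
    then show ?thesis by (intro exI[of _ a] exI[of _ "[]"]) simp
  next
    fix xs
    assume "\<forall>x\<in>set xs. irreducible x" "a = prod_list xs"
    then show ?thesis by (intro exI[of _ 1] exI[of _ xs]) simp
  qed
next
  assume "\<exists>u xs. u dvd 1 \<and> (\<forall>x\<in>set xs. irreducible x) \<and> a = u * prod_list xs"
  then obtain u xs where u: "u dvd 1" and xs: "\<forall>x\<in>set xs. irreducible x" and a: "a = u * prod_list xs"
    by blast
  show "atomic_QM a"
  proof (cases xs)
    case Nil
    with u a show ?thesis
      by (simp add: atomic_QM_def)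
  next
    case (Cons y ys)
    with u xs have "irreducible (u * y)"
      by (simp add: irreducible_unit_mult)
    moreover have "a = prod_list ((u * y) # ys)"
      using a Cons by (simp add: mult.assoc)
    ultimately show ?thesis
      unfolding atomic_QM_def using Cons xs by (intro disjI2 exI[of _ "(u * y) # ys"]) auto
  qed
qed

lemma atomic_QM_mult:
  assumes "atomic_QM a" "atomic_QM b"
  shows "atomic_QM (a * b)"
proof -
  from assms obtain u xs v ys where "u dvd 1" "\<forall>x\<in>set xs. irreducible x" "a = u * prod_list xs"
    and "v dvd 1" "\<forall>y\<in>set ys. irreducible y" "b = v * prod_list ys"
    unfolding atomic_QM_iff_unit_times_irreducibles by blast
  then show ?thesis
    unfolding atomic_QM_iff_unit_times_irreducibles
    by (intro exI[of _ "u * v"] exI[of _ "xs @ ys"]) (auto simp: mult_ac intro: mult_dvd_mono[of _ 1 _ 1, simplified])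
qed

lemma atomic_QM_embed_if_square_lifts_irreducible:
  fixes f :: "int poly"
  assumes irr: "\<And>j. irreducible ((square_lift ^^ j) f)"
  shows "atomic_QM (QM_embed k f)"
proof (cases "degree f = 0")
  case True
  then obtain c where "f = [:c:]"
    by (rule degree_eq_zeroE)
  moreover have "f \<noteq> 0"
    using irr[of 0] by auto
  ultimately show ?thesis
    by (auto simp: atomic_QM_def QM_of_int_is_unit)
next
  case False
  with irr have "irreducible (QM_embed k f)"
    by (rule irreducible_QM_embed)
  then show ?thesis
    unfolding atomic_QM_def by (intro disjI2 exI[of _ "[QM_embed k f]"]) simp
qed

section \<open>Splitting sequences\<close>

definition splitting_step :: "int poly \<Rightarrow> int poly \<Rightarrow> bool" where
  "splitting_step p q \<longleftrightarrow>
     (irreducible p \<longrightarrow> q = square_lift p) \<and>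
     (\<not> irreducible p \<longrightarrow> (\<exists>Q. irreducible q \<and> irreducible Q \<and> p = q * Q))"

lemma splitting_sequence_iff_splitting_steps:
  "splitting_sequence P Ps \<longleftrightarrow> Ps 0 = P \<and> (\<forall>n. splitting_step (Ps n) (Ps (Suc n)))"
  by (simp add: splitting_sequence_def splitting_step_def)

(* p is the current term P_n of the splitting sequence under construction and k the number
   of L's before it, so that QM_embed k p = P_n(x^(1/2^k)) divides P in Q[M_{1/2}]. *)
definition non_atomic_stage :: "int poly \<Rightarrow> nat \<Rightarrow> bool" where
  "non_atomic_stage p k \<longleftrightarrow> \<not> atomic_QM (QM_embed k p) \<and>
     (irreducible p \<or> (\<exists>r. irreducible r \<and> p = square_lift r))"

lemma non_atomic_stage_splitting_step:
  assumes stage: "non_atomic_stage p k"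
  shows "\<exists>q l. splitting_step p q \<and> non_atomic_stage q l"
proof (cases "irreducible p")
  case True
  with stage have "non_atomic_stage (square_lift p) (Suc k)"
    by (auto simp: non_atomic_stage_def QM_embed_square_lift)
  with True show ?thesis
    by (auto simp: splitting_step_def)
next
  case False
  with stage obtain r where "irreducible r" "p = square_lift r"
    by (auto simp: non_atomic_stage_def)
  with False obtain a b where ab: "irreducible a" "irreducible b" "p = a * b"
    using square_lift_reducible_imp_two_irreducible_factors by blast
  from stage have "\<not> atomic_QM (QM_embed k a * QM_embed k b)"
    by (simp add: non_atomic_stage_def ab(3) QM_embed_mult)
  then have "\<not> atomic_QM (QM_embed k a) \<or> \<not> atomic_QM (QM_embed k b)"
    using atomic_QM_mult by blast
  then have "non_atomic_stage a k \<or> non_atomic_stage b k"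
    using ab by (auto simp: non_atomic_stage_def)
  with False ab show ?thesis
    unfolding splitting_step_def by (metis mult.commute)
qed

lemma splitting_sequence_of_non_atomic_stage:
  assumes "non_atomic_stage P 0"
  shows "\<exists>Ps ks. splitting_sequence P Ps \<and> (\<forall>n. non_atomic_stage (Ps n) (ks n))"
proof -
  have "\<exists>f. \<forall>n. (non_atomic_stage (fst (f n)) (snd (f n)) \<and> (n = 0 \<longrightarrow> f n = (P, 0))) \<and>
      splitting_step (fst (f n)) (fst (f (Suc n)))"
  proof (rule dependent_nat_choice)
    show "\<exists>s. non_atomic_stage (fst s) (snd s) \<and> (0 = 0 \<longrightarrow> s = (P, 0))"
      using assms by auto
  next
    fix s :: "int poly \<times> nat" and n :: nat
    assume "non_atomic_stage (fst s) (snd s) \<and> (n = 0 \<longrightarrow> s = (P, 0))"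
    then obtain q l where "splitting_step (fst s) q" "non_atomic_stage q l"
      using non_atomic_stage_splitting_step by blast
    then show "\<exists>t. (non_atomic_stage (fst t) (snd t) \<and> (Suc n = 0 \<longrightarrow> t = (P, 0))) \<and>
        splitting_step (fst s) (fst t)"
      by (intro exI[of _ "(q, l)"]) simp
  qed
  then obtain f where "\<And>n. non_atomic_stage (fst (f n)) (snd (f n))" "f 0 = (P, 0)"
    "\<And>n. splitting_step (fst (f n)) (fst (f (Suc n)))"
    by blast
  then show ?thesis
    by (intro exI[of _ "fst \<circ> f"] exI[of _ "snd \<circ> f"]) (simp add: splitting_sequence_iff_splitting_steps)
qed

lemma splitting_sequence_eventually_square_lifts:
  assumes "splitting_sequence P Ps" "\<And>n. N \<le> n \<Longrightarrow> irreducible (Ps n)"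
  shows "Ps (N + j) = (square_lift ^^ j) (Ps N)"
proof (induction j)
  case 0
  show ?case by simp
next
  case (Suc j)
  have "Ps (Suc (N + j)) = square_lift (Ps (N + j))"
    using assms unfolding splitting_sequence_def by (metis le_add1)
  with Suc.IH show ?case
    by simp
qed

theorem proposition4p5:
  fixes P :: "int poly"
  assumes "irreducible P"
    and "\<not> atomic_QM (QM_of_int_poly P)"
  shows "\<exists>Ps. splitting_sequence P Ps \<and> infinite {n. string_is_S Ps n}"
proof -
  from assms have "non_atomic_stage P 0"
    by (simp add: non_atomic_stage_def QM_of_int_poly_eq_QM_embed)
  then obtain Ps ks where split: "splitting_sequence P Ps" and stage: "\<And>n. non_atomic_stage (Ps n) (ks n)"
    using splitting_sequence_of_non_atomic_stage by blast
  have "infinite {n. string_is_S Ps n}"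
  proof
    assume "finite {n. string_is_S Ps n}"
    then obtain N where "\<And>n. N \<le> n \<Longrightarrow> irreducible (Ps n)"
      by (metis (mono_tags) finite_nat_set_iff_bounded_le mem_Collect_eq not_less_eq_eq string_is_S_def)
    then have "\<And>j. irreducible ((square_lift ^^ j) (Ps N))"
      using splitting_sequence_eventually_square_lifts[OF split] by (metis le_add1)
    then have "atomic_QM (QM_embed (ks N) (Ps N))"
      by (rule atomic_QM_embed_if_square_lifts_irreducible)
    with stage[of N] show False
      by (simp add: non_atomic_stage_def)
  qed
  with split show ?thesis by blast
qed

end
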